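(* There exists a continuous function $f:\mathrm{SO}(4)\to S^3\times S^3$ such that for every rotation $R\in\mathrm{SO}(4)$, $d_4(R,\mathbf{R}_{QQ}(f(R)))\le\pi$.
   Context: Identify $\mathbb{R}^4$ with the quaternions via $(w,x,y,z)\leftrightarrow w+x\mathbf{i}+y\mathbf{j}+z\mathbf{k}$; $S^3$ is the set of unit quaternions. For $(\mathbf{q}_L,\mathbf{q}_R)\in S^3\times S^3$, $\mathbf{R}_{QQ}(\mathbf{q}_L,\mathbf{q}_R)\in\mathrm{SO}(4)$ is the rotation $\mathbf{p}\mapsto\mathbf{q}_L\mathbf{p}\mathbf{q}_R$; every element of $\mathrm{SO}(4)$ is of this form, with $(\mathbf{q}_L,\mathbf{q}_R)$ determined up to overall sign. For unit quaternions let $d_Q(\mathbf{p},\mathbf{q})=\cos^{-1}(\mathbf{p}\cdot\mathbf{q})$. For $R_1=\mathbf{R}_{QQ}(\mathbf{p}_L,\mathbf{p}_R)$ and $R_2=\mathbf{R}_{QQ}(\mathbf{q}_L,\mathbf{q}_R)$, $d_4(R_1,R_2)=\min\{a+b,2\pi-a-b\}+|a-b|$ where $a=d_Q(\mathbf{p}_L,\mathbf{q}_L)$, $b=d_Q(\mathbf{p}_R,\mathbf{q}_R)$ (independent of representatives; equal to $|\theta|+|\phi|$ where $e^{\pm i\theta},e^{\pm i\phi}$ are the eigenvalues of $R_2R_1^{-1}$). *)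

theory Defs
  imports "HOL-Analysis.Analysis"
begin

text \<open>Quaternions are identified with vectors in real^4: (w,x,y,z) with
  components q$1 = w, q$2 = x, q$3 = y, q$4 = z.\<close>

definition qmult :: "real^4 \<Rightarrow> real^4 \<Rightarrow> real^4" where
  "qmult p q = vector
     [ p$1*q$1 - p$2*q$2 - p$3*q$3 - p$4*q$4,
       p$1*q$2 + p$2*q$1 + p$3*q$4 - p$4*q$3,
       p$1*q$3 - p$2*q$4 + p$3*q$1 + p$4*q$2,
       p$1*q$4 + p$2*q$3 - p$3*q$2 + p$4*q$1 ]"

definition S3 :: "(real^4) set" where
  "S3 = sphere 0 1"

definition SO4 :: "(real^4^4) set" where
  "SO4 = {A. orthogonal_matrix A \<and> det A = 1}"

definition RQQ :: "real^4 \<Rightarrow> real^4 \<Rightarrow> real^4^4" where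
  "RQQ qL qR = matrix (\<lambda>p. qmult (qmult qL p) qR)"

definition dQ :: "real^4 \<Rightarrow> real^4 \<Rightarrow> real" where
  "dQ p q = arccos (p \<bullet> q)"

text \<open>d_4 via quaternion representatives (independent of the choice).\<close>
definition d4 :: "real^4^4 \<Rightarrow> real^4^4 \<Rightarrow> real" where
  "d4 R1 R2 = (SOME d. \<exists>pL pR qL qR.
      pL \<in> S3 \<and> pR \<in> S3 \<and> qL \<in> S3 \<and> qR \<in> S3 \<and>
      R1 = RQQ pL pR \<and> R2 = RQQ qL qR \<and>
      d = min (dQ pL qL + dQ pR qR) (2*pi - dQ pL qL - dQ pR qR)
          + \<bar>dQ pL qL - dQ pR qR\<bar>)"

end

theory Submission
  imports Defs
begin

text \<open>Every R \<in> SO(4) equals R_QQ(a,b) for unit quaternions a, b: composing R on the left with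
  rotations of this form one fixes successively 1, i and j, and a rotation of determinant 1
  fixing these three vectors is the identity. Take f(R) = (R 1, 1) = (ab, 1). For the
  representatives (a,b) and (ab,1) the angles \<alpha> = d_Q(a, ab) and \<beta> = d_Q(b, 1) satisfy
  cos \<alpha> cos \<beta> = (a \<bullet> ab)(b \<bullet> 1) = b_1^2 \<ge> 0, so they lie on the same side of \<pi>/2, which
  forces d_4 \<le> \<pi>. The representatives hidden in the definition of d_4 may differ, but
  (p_L \<bullet> q_L)(p_R \<bullet> q_R) is a quarter of the Frobenius inner product of the two matrices and
  therefore does not depend on them.\<close>

lemma vector_4_nth [simp]:
  "(vector [a, b, c, d] :: real^4) $ 1 = a"
  "(vector [a, b, c, d] :: real^4) $ 2 = b"
  "(vector [a, b, c, d] :: real^4) $ 3 = c"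
  "(vector [a, b, c, d] :: real^4) $ 4 = d"
  unfolding vector_def by simp_all

lemma vec4_eq_iff: "(x::real^4) = y \<longleftrightarrow> x$1 = y$1 \<and> x$2 = y$2 \<and> x$3 = y$3 \<and> x$4 = y$4"
  by (simp add: vec_eq_iff forall_4)

lemma inner_vec4: "(x::real^4) \<bullet> y = x$1 * y$1 + x$2 * y$2 + x$3 * y$3 + x$4 * y$4"
  by (simp add: inner_vec_def sum_4)

lemma norm_eq_1_vec4: "norm (x::real^4) = 1 \<longleftrightarrow> x$1^2 + x$2^2 + x$3^2 + x$4^2 = 1"
  by (simp add: norm_eq_1 inner_vec4 power2_eq_square)

lemma matrix_vector_mult_vec4_nth:
  "(M *v (x::real^4)) $ i = M$i$1 * x$1 + M$i$2 * x$2 + M$i$3 * x$3 + M$i$4 * x$4"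
  by (simp add: matrix_vector_mult_def sum_4)

lemma prod_4: "prod f (UNIV::4 set) = f 1 * f 2 * f 3 * f 4"
  unfolding UNIV_4 by (simp add: ac_simps)

lemma inner_orthogonal_matrix_mult:
  fixes A :: "real^'n^'n"
  assumes "orthogonal_matrix A"
  shows "(A *v x) \<bullet> (A *v y) = x \<bullet> y"
  using assms orthogonal_transformation_matrix[of "(*v) A"]
  by (simp add: matrix_vector_mul_linear orthogonal_transformation_def)

lemma norm_orthogonal_matrix_mult:
  fixes A :: "real^'n^'n"
  assumes "orthogonal_matrix A"
  shows "norm (A *v x) = norm x"
  using assms by (simp add: norm_eq_sqrt_inner inner_orthogonal_matrix_mult)

section \<open>Quaternion algebra\<close>

lemma qmult_nth [simp]:
  "qmult p q $ 1 = p$1 * q$1 - p$2 * q$2 - p$3 * q$3 - p$4 * q$4"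
  "qmult p q $ 2 = p$1 * q$2 + p$2 * q$1 + p$3 * q$4 - p$4 * q$3"
  "qmult p q $ 3 = p$1 * q$3 - p$2 * q$4 + p$3 * q$1 + p$4 * q$2"
  "qmult p q $ 4 = p$1 * q$4 + p$2 * q$3 - p$3 * q$2 + p$4 * q$1"
  by (simp_all add: qmult_def)

lemma qmult_assoc: "qmult (qmult a b) c = qmult a (qmult b c)"
  by (simp add: vec4_eq_iff algebra_simps)

lemma qmult_scaleR_left [simp]: "qmult (r *\<^sub>R p) q = r *\<^sub>R qmult p q"
  and qmult_scaleR_right [simp]: "qmult p (r *\<^sub>R q) = r *\<^sub>R qmult p q"
  by (simp_all add: vec4_eq_iff algebra_simps)

lemma norm_qmult: "norm (qmult p q) = norm p * norm q"
proof -
  have "(norm (qmult p q))\<^sup>2 = (norm p)\<^sup>2 * (norm q)\<^sup>2"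
    unfolding power2_norm_eq_inner inner_vec4 by (simp add: algebra_simps)
  then show ?thesis by (simp add: power2_eq_iff_nonneg flip: power_mult_distrib)
qed

definition qone :: "real^4" where "qone = vector [1, 0, 0, 0]"
definition qi :: "real^4" where "qi = vector [0, 1, 0, 0]"
definition qj :: "real^4" where "qj = vector [0, 0, 1, 0]"
definition qk :: "real^4" where "qk = vector [0, 0, 0, 1]"

definition qconj :: "real^4 \<Rightarrow> real^4" where "qconj q = vector [q$1, - q$2, - q$3, - q$4]"

lemma quaternion_units_nth [simp]:
  "qone$1 = 1" "qone$2 = 0" "qone$3 = 0" "qone$4 = 0"
  "qi$1 = 0" "qi$2 = 1" "qi$3 = 0" "qi$4 = 0"
  "qj$1 = 0" "qj$2 = 0" "qj$3 = 1" "qj$4 = 0"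
  "qk$1 = 0" "qk$2 = 0" "qk$3 = 0" "qk$4 = 1"
  by (simp_all add: qone_def qi_def qj_def qk_def)

lemma qconj_nth [simp]:
  "qconj q $ 1 = q$1" "qconj q $ 2 = - q$2" "qconj q $ 3 = - q$3" "qconj q $ 4 = - q$4"
  by (simp_all add: qconj_def)

lemma qmult_qone [simp]: "qmult qone p = p" "qmult p qone = p"
  by (simp_all add: vec4_eq_iff)

lemma norm_qone [simp]: "norm qone = 1"
  by (simp add: norm_eq_1_vec4)

lemma qconj_qconj [simp]: "qconj (qconj q) = q"
  by (simp add: vec4_eq_iff)

lemma norm_qconj [simp]: "norm (qconj q) = norm q"
  by (simp add: norm_eq_sqrt_inner inner_vec4)

lemma qmult_qconj:
  assumes "norm a = 1"
  shows "qmult (qconj a) a = qone" "qmult a (qconj a) = qone"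
  using assms by (simp_all add: norm_eq_1_vec4 vec4_eq_iff power2_eq_square algebra_simps)

lemma inner_qmult_self_left: "a \<bullet> qmult a b = (norm a)\<^sup>2 * b$1"
  by (simp add: power2_norm_eq_inner inner_vec4 algebra_simps)

text \<open>For a unit quaternion a one has a^2 = 2 Re(a) a - 1, hence (1 + a)^2 = 2 (1 + Re(a)) a.\<close>
lemma qmult_qone_plus_self:
  assumes "norm a = 1"
  shows "qmult (qone + a) (qone + a) = (2 + 2 * a$1) *\<^sub>R a"
  using assms by (simp add: norm_eq_1_vec4 vec4_eq_iff power2_eq_square algebra_simps)

lemma unit_quaternion_square_root:
  assumes a: "norm a = 1"
  shows "\<exists>c. norm c = 1 \<and> qmult c c = a"
proof (cases "a = - qone")
  case True
  then show ?thesis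
    by (intro exI[of _ qi]) (simp add: vec4_eq_iff norm_eq_1_vec4)
next
  case False
  have "\<bar>a$1\<bar> \<le> 1"
    using component_le_norm_cart[of a 1] a by simp
  moreover have "a$1 \<noteq> -1"
  proof
    assume "a$1 = -1"
    then have "a$2^2 + a$3^2 + a$4^2 = 0"
      using a by (simp add: norm_eq_1_vec4)
    then have "a = - qone"
      using \<open>a$1 = -1\<close> by (simp add: vec4_eq_iff add_nonneg_eq_0_iff)
    with False show False ..
  qed
  ultimately have pos: "0 < 2 + 2 * a$1" by linarith
  have norm_sq: "(norm (qone + a))\<^sup>2 = 2 + 2 * a$1"
    using a unfolding power2_norm_eq_inner inner_vec4 norm_eq_1_vec4
    by (simp add: algebra_simps power2_eq_square)
  define c where "c = (1 / norm (qone + a)) *\<^sub>R (qone + a)"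
  have "norm (qone + a) \<noteq> 0"
    using norm_sq pos by auto
  then have "norm c = 1"
    by (simp add: c_def)
  moreover have "qmult c c = a"
    using norm_sq pos by (simp add: c_def qmult_qone_plus_self[OF a] power2_eq_square)
  ultimately show ?thesis by blast
qed

section \<open>The rotations R_QQ\<close>

lemma linear_qmult_sandwich: "linear (\<lambda>p. qmult (qmult a p) b)"
  by (rule linearI) (simp_all add: vec4_eq_iff algebra_simps)

lemma RQQ_apply [simp]: "RQQ a b *v p = qmult (qmult a p) b"
  unfolding RQQ_def by (simp add: matrix_works linear_qmult_sandwich)

lemma RQQ_mult: "RQQ a b ** RQQ c d = RQQ (qmult a c) (qmult d b)"
  by (simp add: matrix_eq matrix_vector_mul_assoc[symmetric] qmult_assoc)

lemma RQQ_qconj_mult: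
  assumes "norm a = 1" "norm b = 1"
  shows "RQQ (qconj a) (qconj b) ** RQQ a b = mat 1"
  using assms by (simp add: RQQ_mult qmult_qconj matrix_eq)

lemma RQQ_qconj_apply_qone:
  assumes "norm q = 1"
  shows "RQQ q (qconj q) *v qone = qone"
  using assms by (simp add: qmult_qconj)

lemma orthogonal_matrix_RQQ:
  assumes "norm a = 1" "norm b = 1"
  shows "orthogonal_matrix (RQQ a b)"
proof -
  have "orthogonal_transformation (\<lambda>p. qmult (qmult a p) b)"
    using assms by (simp add: orthogonal_transformation linear_qmult_sandwich norm_qmult)
  then show ?thesis
    unfolding RQQ_def using orthogonal_transformation_matrix by blast
qed

text \<open>The determinant is \<plusminus>1 by orthogonality and a square, since R_QQ(a,b) = R_QQ(c,d)^2
  for square roots c, d of a, b.\<close>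
lemma det_RQQ:
  assumes "norm a = 1" "norm b = 1"
  shows "det (RQQ a b) = 1"
proof -
  obtain c d where cd: "norm c = 1" "qmult c c = a" "norm d = 1" "qmult d d = b"
    using unit_quaternion_square_root assms by metis
  then have "RQQ a b = RQQ c d ** RQQ c d"
    by (simp add: RQQ_mult)
  then have "det (RQQ a b) = (det (RQQ c d))\<^sup>2"
    by (simp add: det_mul power2_eq_square)
  moreover have "\<bar>det (RQQ c d)\<bar> = 1"
    using det_orthogonal_matrix orthogonal_matrix_RQQ cd by fastforce
  ultimately show ?thesis
    by (metis power2_abs power_one)
qed

lemma RQQ_in_SO4: "norm a = 1 \<Longrightarrow> norm b = 1 \<Longrightarrow> RQQ a b \<in> SO4"
  by (simp add: SO4_def orthogonal_matrix_RQQ det_RQQ)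

lemma inner_RQQ: "RQQ a b \<bullet> RQQ c d = 4 * (a \<bullet> c) * (b \<bullet> d)"
proof -
  have "RQQ a b \<bullet> RQQ c d = (\<Sum>i\<in>UNIV. \<Sum>j\<in>UNIV. RQQ a b $ i $ j * RQQ c d $ i $ j)"
    by (simp add: inner_vec_def)
  also have "\<dots> = 4 * (a \<bullet> c) * (b \<bullet> d)"
    unfolding RQQ_def matrix_def inner_vec4 by (simp add: sum_4 axis_def) algebra
  finally show ?thesis .
qed

section \<open>Every rotation in SO(4) is some R_QQ(a,b)\<close>

definition quaternion_rotations :: "(real^4^4) set" where
  "quaternion_rotations = {RQQ a b | a b. a \<in> S3 \<and> b \<in> S3}"

lemma mem_S3 [simp]: "a \<in> S3 \<longleftrightarrow> norm a = 1"
  by (simp add: S3_def)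

lemma RQQ_in_quaternion_rotations:
  "norm a = 1 \<Longrightarrow> norm b = 1 \<Longrightarrow> RQQ a b \<in> quaternion_rotations"
  by (auto simp: quaternion_rotations_def)

lemma SO4_mult: "A \<in> SO4 \<Longrightarrow> B \<in> SO4 \<Longrightarrow> A ** B \<in> SO4"
  by (simp add: SO4_def orthogonal_matrix_mul det_mul)

lemma quaternion_rotations_subset_SO4: "quaternion_rotations \<subseteq> SO4"
  by (auto simp: quaternion_rotations_def RQQ_in_SO4)

lemma quaternion_rotations_cancel_left:
  assumes "G \<in> quaternion_rotations" "G ** A \<in> quaternion_rotations"
  shows "A \<in> quaternion_rotations"
proof -
  obtain a b c d where units: "norm a = 1" "norm b = 1" "norm c = 1" "norm d = 1"
    and G: "G = RQQ a b" and GA: "G ** A = RQQ c d"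
    using assms by (auto simp: quaternion_rotations_def)
  have "A = RQQ (qconj a) (qconj b) ** (G ** A)"
    by (simp add: G matrix_mul_assoc RQQ_qconj_mult units)
  also have "\<dots> = RQQ (qmult (qconj a) c) (qmult d (qconj b))"
    by (simp add: GA RQQ_mult)
  finally show ?thesis
    using units by (simp add: RQQ_in_quaternion_rotations norm_qmult)
qed

lemma SO4_fixing_qone_qi_qj_eq_mat_1:
  assumes A: "A \<in> SO4" and fixed: "A *v qone = qone" "A *v qi = qi" "A *v qj = qj"
  shows "A = mat 1"
proof -
  have orth: "orthogonal_matrix A"
    using A by (simp add: SO4_def)
  have columns_123: "A$i$1 = qone$i" "A$i$2 = qi$i" "A$i$3 = qj$i" for i
    using fixed by (simp_all add: vec_eq_iff matrix_vector_mult_vec4_nth)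
  have "(A *v qk) \<bullet> qone = 0" "(A *v qk) \<bullet> qi = 0" "(A *v qk) \<bullet> qj = 0"
    using inner_orthogonal_matrix_mult[OF orth, of qk qone] inner_orthogonal_matrix_mult[OF orth, of qk qi]
      inner_orthogonal_matrix_mult[OF orth, of qk qj] fixed
    by (simp_all add: inner_vec4)
  then have column_4: "A$1$4 = 0" "A$2$4 = 0" "A$3$4 = 0"
    by (simp_all add: inner_vec4 matrix_vector_mult_vec4_nth)
  have off_diagonal: "A$i$j = 0" if "i \<noteq> j" for i j
    using exhaust_4[of i] exhaust_4[of j] that
    by (elim disjE) (simp_all add: columns_123 column_4)
  have diagonal_123: "A$i$i = 1" if "i \<noteq> 4" for i
    using exhaust_4[of i] that by (auto simp: columns_123)
  have "det A = (\<Prod>i\<in>UNIV. A$i$i)"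
    by (rule det_diagonal) (simp add: off_diagonal)
  also have "\<dots> = A$4$4"
    by (simp add: prod_4 diagonal_123)
  finally have "A$4$4 = 1"
    using A by (simp add: SO4_def)
  then have "A$i$i = 1" for i
    using diagonal_123 by (cases "i = 4") auto
  then show ?thesis
    by (simp add: vec_eq_iff mat_def off_diagonal)
qed

lemma RQQ_qconj_apply_qi_qj:
  "RQQ q (qconj q) *v qi = vector [0, q$1^2 + q$2^2 - q$3^2 - q$4^2,
     2 * (q$2 * q$3 + q$1 * q$4), 2 * (q$2 * q$4 - q$1 * q$3)]"
  "RQQ q (qconj q) *v qj = vector [0, 2 * (q$2 * q$3 - q$1 * q$4),
     q$1^2 - q$2^2 + q$3^2 - q$4^2, 2 * (q$3 * q$4 + q$1 * q$2)]"
  by (simp_all add: vec4_eq_iff power2_eq_square algebra_simps)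

lemma pure_unit_quaternion_conj_qi:
  assumes v: "norm v = 1" "v$1 = 0"
  shows "\<exists>q. norm q = 1 \<and> RQQ q (qconj q) *v qi = v"
proof (cases "v$2 = -1")
  case True
  then have "v$3^2 + v$4^2 = 0"
    using v by (simp add: norm_eq_1_vec4)
  then show ?thesis
    using True v
    by (intro exI[of _ qj]) (simp add: RQQ_qconj_apply_qi_qj vec4_eq_iff norm_eq_1_vec4 add_nonneg_eq_0_iff)
next
  case False
  have "\<bar>v$2\<bar> \<le> 1"
    using component_le_norm_cart[of v 2] v by simp
  with False have pos: "0 < 1 + v$2" by linarith
  define a where "a = sqrt ((1 + v$2) / 2)"
  have a2: "a\<^sup>2 = (1 + v$2) / 2" and a_pos: "0 < a"
    using pos by (simp_all add: a_def)
  define q :: "real^4" where "q = vector [a, 0, - v$4 / (2 * a), v$3 / (2 * a)]"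
  have yz: "v$3^2 + v$4^2 = (1 - v$2) * (1 + v$2)"
    using v by (simp add: norm_eq_1_vec4 algebra_simps power2_eq_square)
  have cd: "q$3^2 + q$4^2 = (1 - v$2) / 2"
  proof -
    have "q$3^2 + q$4^2 = (v$3^2 + v$4^2) / (4 * a\<^sup>2)"
      using a_pos by (simp add: q_def power_divide field_simps)
    also have "\<dots> = (1 - v$2) * (1 + v$2) / (4 * ((1 + v$2) / 2))"
      unfolding yz a2 ..
    also have "\<dots> = (1 - v$2) / 2"
      using pos by (simp add: field_simps)
    finally show ?thesis .
  qed
  have q_nth: "q$1 = a" "q$2 = 0" "2 * (a * q$4) = v$3" "2 * (a * q$3) = - v$4"
    using a_pos by (simp_all add: q_def)
  have "norm q = 1"
    using cd a2 by (simp add: norm_eq_1_vec4 q_nth)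
  moreover have "RQQ q (qconj q) *v qi = v"
    using cd a2 q_nth v by (simp add: RQQ_qconj_apply_qi_qj vec4_eq_iff power2_eq_square)
  ultimately show ?thesis by blast
qed

text \<open>The witness is q = a + b i, where a + b\<i> is a complex square root of u_3 + u_4\<i>.\<close>
lemma unit_quaternion_conj_qj_fixing_qi:
  assumes u: "norm u = 1" "u$1 = 0" "u$2 = 0"
  shows "\<exists>q. norm q = 1 \<and> RQQ q (qconj q) *v qi = qi \<and> RQQ q (qconj q) *v qj = u"
proof -
  define z where "z = csqrt (Complex (u$3) (u$4))"
  have "cmod (Complex (u$3) (u$4)) = 1"
    using u by (simp add: norm_eq_1_vec4 complex_norm)
  then have "cmod z = 1"
    by (simp add: z_def)
  then have z_norm: "Re z ^ 2 + Im z ^ 2 = 1"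
    by (metis cmod_power2 power_one)
  have "z\<^sup>2 = Complex (u$3) (u$4)"
    by (simp add: z_def)
  then have z_sq: "Re z ^ 2 - Im z ^ 2 = u$3" "2 * Re z * Im z = u$4"
    by (auto simp: complex_eq_iff power2_eq_square algebra_simps)
  define q :: "real^4" where "q = vector [Re z, Im z, 0, 0]"
  have "norm q = 1"
    using z_norm by (simp add: norm_eq_1_vec4 q_def)
  moreover have "RQQ q (qconj q) *v qi = qi" "RQQ q (qconj q) *v qj = u"
    using z_norm z_sq u
    by (simp_all add: RQQ_qconj_apply_qi_qj vec4_eq_iff q_def power2_eq_square algebra_simps)
  ultimately show ?thesis by blast
qed

lemma quaternion_rotation_fixing_qone:
  assumes A: "A \<in> SO4"
  shows "\<exists>G\<in>quaternion_rotations. (G ** A) *v qone = qone"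
proof -
  define w where "w = A *v qone"
  have w: "norm w = 1"
    using A norm_orthogonal_matrix_mult[of A qone] by (simp add: w_def SO4_def norm_eq_1_vec4)
  have "(RQQ (qconj w) qone ** A) *v qone = qone"
    by (simp add: matrix_vector_mul_assoc[symmetric] flip: w_def) (simp add: qmult_qconj w)
  then show ?thesis
    using w RQQ_in_quaternion_rotations[of "qconj w" qone] by auto
qed

lemma quaternion_rotation_fixing_qone_qi:
  assumes A: "A \<in> SO4" and fixed: "A *v qone = qone"
  shows "\<exists>G\<in>quaternion_rotations. (G ** A) *v qone = qone \<and> (G ** A) *v qi = qi"
proof -
  have orth: "orthogonal_matrix A"
    using A by (simp add: SO4_def)
  define v where "v = A *v qi"
  have "norm v = 1" "v \<bullet> qone = 0"
    using norm_orthogonal_matrix_mult[OF orth, of qi] inner_orthogonal_matrix_mult[OF orth, of qi qone]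
    by (simp_all add: v_def fixed norm_eq_1_vec4 inner_vec4)
  then obtain q where q: "norm q = 1" "RQQ q (qconj q) *v qi = v"
    using pure_unit_quaternion_conj_qi by (auto simp: inner_vec4)
  let ?G = "RQQ (qconj q) q"
  have "(?G ** A) *v qone = qone"
    using RQQ_qconj_apply_qone[of "qconj q"] q
    by (simp add: matrix_vector_mul_assoc[symmetric] fixed del: RQQ_apply)
  moreover have "(?G ** A) *v qi = (?G ** RQQ q (qconj q)) *v qi"
    by (simp add: matrix_vector_mul_assoc[symmetric] q v_def del: RQQ_apply)
  then have "(?G ** A) *v qi = qi"
    using RQQ_qconj_mult[of q "qconj q"] q by simp
  ultimately show ?thesis
    using q RQQ_in_quaternion_rotations[of "qconj q" q] by auto
qed

lemma quaternion_rotation_fixing_qone_qi_qj: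
  assumes A: "A \<in> SO4" and fixed: "A *v qone = qone" "A *v qi = qi"
  shows "\<exists>G\<in>quaternion_rotations.
           (G ** A) *v qone = qone \<and> (G ** A) *v qi = qi \<and> (G ** A) *v qj = qj"
proof -
  have orth: "orthogonal_matrix A"
    using A by (simp add: SO4_def)
  define u where "u = A *v qj"
  have "norm u = 1" "u \<bullet> qone = 0" "u \<bullet> qi = 0"
    using norm_orthogonal_matrix_mult[OF orth, of qj]
      inner_orthogonal_matrix_mult[OF orth, of qj qone] inner_orthogonal_matrix_mult[OF orth, of qj qi]
    by (simp_all add: u_def fixed norm_eq_1_vec4 inner_vec4)
  then obtain q where q: "norm q = 1" "RQQ q (qconj q) *v qi = qi" "RQQ q (qconj q) *v qj = u"
    using unit_quaternion_conj_qj_fixing_qi by (auto simp: inner_vec4)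
  let ?G = "RQQ (qconj q) q"
  have inverse: "?G ** RQQ q (qconj q) = mat 1"
    using RQQ_qconj_mult[of q "qconj q"] q by simp
  have "(?G ** A) *v qone = qone"
    using RQQ_qconj_apply_qone[of "qconj q"] q
    by (simp add: matrix_vector_mul_assoc[symmetric] fixed del: RQQ_apply)
  moreover have "(?G ** A) *v qi = (?G ** RQQ q (qconj q)) *v qi"
    by (simp add: matrix_vector_mul_assoc[symmetric] q fixed del: RQQ_apply)
  moreover have "(?G ** A) *v qj = (?G ** RQQ q (qconj q)) *v qj"
    by (simp add: matrix_vector_mul_assoc[symmetric] q u_def del: RQQ_apply)
  ultimately show ?thesis
    using q inverse RQQ_in_quaternion_rotations[of "qconj q" q] by auto
qed

theorem SO4_eq_quaternion_rotations: "SO4 = quaternion_rotations"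
proof
  show "SO4 \<subseteq> quaternion_rotations"
  proof
    fix A assume A: "A \<in> SO4"
    obtain G1 where G1: "G1 \<in> quaternion_rotations" and A1: "(G1 ** A) *v qone = qone"
      using quaternion_rotation_fixing_qone[OF A] by blast
    have A1_SO4: "G1 ** A \<in> SO4"
      using G1 A quaternion_rotations_subset_SO4 SO4_mult by blast
    obtain G2 where G2: "G2 \<in> quaternion_rotations"
      and A2: "(G2 ** (G1 ** A)) *v qone = qone" "(G2 ** (G1 ** A)) *v qi = qi"
      using quaternion_rotation_fixing_qone_qi[OF A1_SO4 A1] by blast
    have A2_SO4: "G2 ** (G1 ** A) \<in> SO4"
      using G2 A1_SO4 quaternion_rotations_subset_SO4 SO4_mult by blast
    obtain G3 where G3: "G3 \<in> quaternion_rotations"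
      and A3: "(G3 ** (G2 ** (G1 ** A))) *v qone = qone" "(G3 ** (G2 ** (G1 ** A))) *v qi = qi"
        "(G3 ** (G2 ** (G1 ** A))) *v qj = qj"
      using quaternion_rotation_fixing_qone_qi_qj[OF A2_SO4 A2] by blast
    have "G3 ** (G2 ** (G1 ** A)) \<in> SO4"
      using G3 A2_SO4 quaternion_rotations_subset_SO4 SO4_mult by blast
    then have "G3 ** (G2 ** (G1 ** A)) = RQQ qone qone"
      using SO4_fixing_qone_qi_qj_eq_mat_1 A3 by (simp add: matrix_eq)
    then have "G3 ** (G2 ** (G1 ** A)) \<in> quaternion_rotations"
      using RQQ_in_quaternion_rotations[of qone qone] by simp
    then show "A \<in> quaternion_rotations"
      using G1 G2 G3 quaternion_rotations_cancel_left by blast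
  qed
qed (rule quaternion_rotations_subset_SO4)

section \<open>Bounding d_4\<close>

lemma dQ_bounds:
  assumes "norm p = 1" "norm q = 1"
  shows "cos (dQ p q) = p \<bullet> q" "0 \<le> dQ p q" "dQ p q \<le> pi"
proof -
  have "\<bar>p \<bullet> q\<bar> \<le> 1"
    using Cauchy_Schwarz_ineq2[of p q] assms by simp
  then show "cos (dQ p q) = p \<bullet> q" "0 \<le> dQ p q" "dQ p q \<le> pi"
    by (simp_all add: dQ_def arccos_lbound arccos_ubound)
qed

definition d4_of_angles :: "real \<Rightarrow> real \<Rightarrow> real" where
  "d4_of_angles a b = min (a + b) (2*pi - a - b) + \<bar>a - b\<bar>"

lemma d4_of_angles_le_pi:
  assumes "0 \<le> a" "a \<le> pi" "0 \<le> b" "b \<le> pi" "0 \<le> cos a * cos b"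
  shows "d4_of_angles a b \<le> pi"
proof -
  have cos_pos: "0 < cos x" if "0 \<le> x" "x < pi/2" for x
    using cos_gt_zero_pi[of x] that by simp
  have cos_neg: "cos x < 0" if "pi/2 < x" "x \<le> pi" for x
    using cos_gt_zero_pi[of "pi - x"] that by simp
  consider "a \<le> pi/2" "b \<le> pi/2" | "pi/2 \<le> a" "pi/2 \<le> b"
    | "a < pi/2" "pi/2 < b" | "pi/2 < a" "b < pi/2"
    by linarith
  then show ?thesis
  proof cases
    case 3
    then have "cos a * cos b < 0"
      using assms by (intro mult_pos_neg cos_pos cos_neg) auto
    with assms show ?thesis by simp
  next
    case 4
    then have "cos a * cos b < 0"
      using assms by (intro mult_neg_pos cos_pos cos_neg) auto
    with assms show ?thesis by simp
  qed (auto simp: d4_of_angles_def min_def abs_if)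
qed

lemma d4_RQQ_representatives:
  assumes "pL \<in> S3" "pR \<in> S3" "qL \<in> S3" "qR \<in> S3"
  obtains pL' pR' qL' qR' where "pL' \<in> S3" "pR' \<in> S3" "qL' \<in> S3" "qR' \<in> S3"
    "RQQ pL pR = RQQ pL' pR'" "RQQ qL qR = RQQ qL' qR'"
    "d4 (RQQ pL pR) (RQQ qL qR) = d4_of_angles (dQ pL' qL') (dQ pR' qR')"
proof -
  let ?R1 = "RQQ pL pR" and ?R2 = "RQQ qL qR"
  have "\<exists>d. \<exists>pL pR qL qR. pL \<in> S3 \<and> pR \<in> S3 \<and> qL \<in> S3 \<and> qR \<in> S3 \<and>
      ?R1 = RQQ pL pR \<and> ?R2 = RQQ qL qR \<and>
      d = min (dQ pL qL + dQ pR qR) (2*pi - dQ pL qL - dQ pR qR) + \<bar>dQ pL qL - dQ pR qR\<bar>"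
    using assms by blast
  from someI_ex[OF this] show ?thesis
    using that unfolding d4_def d4_of_angles_def by blast
qed

lemma d4_RQQ_le_pi:
  assumes units: "pL \<in> S3" "pR \<in> S3" "qL \<in> S3" "qR \<in> S3"
    and same_sign: "0 \<le> (pL \<bullet> qL) * (pR \<bullet> qR)"
  shows "d4 (RQQ pL pR) (RQQ qL qR) \<le> pi"
proof -
  obtain pL' pR' qL' qR' where units': "pL' \<in> S3" "pR' \<in> S3" "qL' \<in> S3" "qR' \<in> S3"
    and R: "RQQ pL pR = RQQ pL' pR'" "RQQ qL qR = RQQ qL' qR'"
    and d4: "d4 (RQQ pL pR) (RQQ qL qR) = d4_of_angles (dQ pL' qL') (dQ pR' qR')"
    using d4_RQQ_representatives[OF units] by blast
  have "4 * (pL' \<bullet> qL') * (pR' \<bullet> qR') = 4 * (pL \<bullet> qL) * (pR \<bullet> qR)"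
    using inner_RQQ[of pL' pR' qL' qR'] inner_RQQ[of pL pR qL qR] R by simp
  then have "0 \<le> cos (dQ pL' qL') * cos (dQ pR' qR')"
    using same_sign units' by (simp add: dQ_bounds)
  then show ?thesis
    unfolding d4 using units' by (intro d4_of_angles_le_pi) (simp_all add: dQ_bounds)
qed

theorem theorem13:
  shows "\<exists>f :: real^4^4 \<Rightarrow> (real^4) \<times> (real^4).
           continuous_on SO4 f \<and> f ` SO4 \<subseteq> S3 \<times> S3 \<and>
           (\<forall>R\<in>SO4. d4 R (RQQ (fst (f R)) (snd (f R))) \<le> pi)"
proof (intro exI conjI)
  let ?f = "\<lambda>R::real^4^4. (R *v qone, qone)"
  show "continuous_on SO4 ?f"
    unfolding matrix_vector_mult_def by (intro continuous_intros)
  show "?f ` SO4 \<subseteq> S3 \<times> S3"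
    using norm_orthogonal_matrix_mult[of _ qone] by (auto simp: SO4_def)
  show "\<forall>R\<in>SO4. d4 R (RQQ (fst (?f R)) (snd (?f R))) \<le> pi"
  proof
    fix R assume "R \<in> SO4"
    then obtain a b where ab: "a \<in> S3" "b \<in> S3" "R = RQQ a b"
      by (auto simp: SO4_eq_quaternion_rotations quaternion_rotations_def)
    have "a \<bullet> qmult a b = b$1"
      using ab by (simp add: inner_qmult_self_left)
    moreover have "b \<bullet> qone = b$1"
      by (simp add: inner_vec4)
    ultimately have "0 \<le> (a \<bullet> qmult a b) * (b \<bullet> qone)"
      by simp
    then show "d4 R (RQQ (fst (?f R)) (snd (?f R))) \<le> pi"
      using ab by (simp add: d4_RQQ_le_pi norm_qmult)
  qed
qed

end
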